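(* Let $\theta,\kappa\in\mathbb{F}_{q^3}^*$ with $N(\theta)\neq N(\kappa)$. For any point $P\in\Pi_\kappa$, the projection of $\Pi_\theta$ from $P$ onto $m_T$, i.e. the set $\{PQ\cap m_T: Q\in\Pi_\theta\}$, equals $\mathcal S_{-\kappa\theta}$.
   Context: Let $q$ be a prime power, $\mathbb{F}_{q^3}^*=\mathbb{F}_{q^3}\setminus\{0\}$, $N(x)=x^{q^2+q+1}$. Points of $\mathrm{PG}(2,q^3)$ have homogeneous coordinates $(x,y,z)$ and lines $[a,b,c]$. Let $m_T$ be the line $[0,0,1]$. For $\theta\in\mathbb{F}_{q^3}^*$ let $\mathcal S_\theta=\{(x\theta,x^q,0):x\in\mathbb{F}_{q^3}^*\}$ and $\Pi_\theta=\{(r\theta^{q+1},r^q,r^{q^2}\theta):r\in\mathbb{F}_{q^3}^*\}$. *)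

theory Defs
  imports "HOL-Computational_Algebra.Primes"
begin

text \<open>Projective plane PG(2,F) over a finite field F of order q^3.
A point is the set of all nonzero scalar multiples of a nonzero vector (its
homogeneous coordinates).\<close>

type_synonym 'a vec3 = "'a \<times> 'a \<times> 'a"

definition smult3 :: "'a::field \<Rightarrow> 'a vec3 \<Rightarrow> 'a vec3" where
  "smult3 c v = (case v of (x,y,z) \<Rightarrow> (c*x, c*y, c*z))"

definition ppt :: "'a::field vec3 \<Rightarrow> 'a vec3 set" where
  "ppt v = {smult3 c v | c. c \<noteq> 0}"

definition PG2 :: "'a::field vec3 set set" where
  "PG2 = {ppt v | v. v \<noteq> (0,0,0)}"

definition on_line :: "'a::field vec3 \<Rightarrow> 'a vec3 set \<Rightarrow> bool" where
  "on_line l P \<longleftrightarrow> (\<forall>(x,y,z)\<in>P. (case l of (a,b,c) \<Rightarrow> a*x + b*y + c*z = 0))"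

definition det3 :: "'a::field vec3 \<Rightarrow> 'a vec3 \<Rightarrow> 'a vec3 \<Rightarrow> 'a" where
  "det3 u v w = (case u of (u1,u2,u3) \<Rightarrow> case v of (v1,v2,v3) \<Rightarrow> case w of (w1,w2,w3) \<Rightarrow>
     u1*(v2*w3 - v3*w2) - u2*(v1*w3 - v3*w1) + u3*(v1*w2 - v2*w1))"

definition collinear3 :: "'a::field vec3 set \<Rightarrow> 'a vec3 set \<Rightarrow> 'a vec3 set \<Rightarrow> bool" where
  "collinear3 P Q R \<longleftrightarrow> (\<exists>u\<in>P. \<exists>v\<in>Q. \<exists>w\<in>R. det3 u v w = 0)"

definition mT :: "'a::field vec3" where "mT = (0,0,1)"

definition Nrm :: "nat \<Rightarrow> 'a::field \<Rightarrow> 'a" where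
  "Nrm q x = x ^ (q^2 + q + 1)"

definition S_set :: "nat \<Rightarrow> 'a::field \<Rightarrow> 'a vec3 set set" where
  "S_set q \<theta> = {ppt (x*\<theta>, x^q, 0) | x. x \<noteq> 0}"

definition Pi_set :: "nat \<Rightarrow> 'a::field \<Rightarrow> 'a vec3 set set" where
  "Pi_set q \<theta> = {ppt (r*\<theta>^(q+1), r^q, r^(q^2)*\<theta>) | r. r \<noteq> 0}"

definition projection :: "'a::field vec3 set \<Rightarrow> 'a vec3 set set \<Rightarrow> 'a vec3 \<Rightarrow> 'a vec3 set set" where
  "projection P A l = {R \<in> PG2. \<exists>Q\<in>A. Q \<noteq> P \<and> on_line l R \<and> collinear3 P Q R}"

end

theory Submission
  imports Defs "HOL-Number_Theory.Residues"
begin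

(* Let P = <(s kappa^(q+1), s^q, s^(q^2) kappa)> and Q_r = <(r theta^(q+1), r^q, r^(q^2) theta)>.
   Expanding the determinant, (w1, w2, 0) lies on the line P Q_r iff
   w1 L(r) + kappa theta w2 L(r)^q = 0, where L(r) = s^q theta r^(q^2) - s^(q^2) kappa r^q
   is F_q-linear. A nonzero root of L would make theta / kappa a quotient u^q / u, which has
   norm 1; so L is injective, hence bijective on the finite field. Thus P Q_r meets m_T in
   <(-kappa theta x, x^q, 0)> with x = 1 / L(r), and x runs over all nonzero elements. *)

lemma finite_field_pow_card_minus_one:
  fixes x :: "'a::{field,finite}"
  assumes "x \<noteq> 0"
  shows "x ^ (card (UNIV :: 'a set) - 1) = 1"
proof -
  let ?U = "UNIV - {0 :: 'a}"
  have "(\<Prod>y\<in>?U. x * y) = \<Prod>?U"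
    by (rule prod.reindex_bij_witness[of _ "\<lambda>y. y / x" "(*) x"]) (use assms in auto)
  hence "x ^ card ?U * \<Prod>?U = 1 * \<Prod>?U"
    by (simp add: prod.distrib)
  moreover have "\<Prod>?U \<noteq> 0"
    by simp
  moreover have "card ?U = card (UNIV :: 'a set) - 1"
    by (simp add: card_Diff_singleton)
  ultimately show ?thesis
    by simp
qed

lemma finite_field_pow_card:
  fixes x :: "'a::{field,finite}"
  shows "x ^ card (UNIV :: 'a set) = x"
proof (cases "x = 0")
  case True
  then show ?thesis by (simp add: finite_UNIV_card_ge_0)
next
  case False
  have "x ^ card (UNIV :: 'a set) = x ^ Suc (card (UNIV :: 'a set) - 1)"
    using finite_UNIV_card_ge_0[where 'a='a] by simp
  also have "\<dots> = x"
    using finite_field_pow_card_minus_one[OF False] by simp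
  finally show ?thesis .
qed

lemma CHAR_finite_field:
  assumes "prime p" and "card (UNIV :: 'a::{field,finite} set) = p ^ n"
  shows "CHAR('a) = p"
proof -
  have "prime CHAR('a)"
    by (intro prime_CHAR_semidom finite_imp_CHAR_pos) simp
  moreover have "CHAR('a) dvd p ^ n"
    using CHAR_dvd_CARD[where 'a='a] assms(2) by simp
  ultimately show ?thesis
    using assms(1) prime_dvd_power primes_dvd_imp_eq by blast
qed

lemma smult3_simp [simp]: "smult3 c (x, y, z) = (c * x, c * y, c * z)"
  by (simp add: smult3_def)

lemma mem_ppt_iff: "w \<in> ppt v \<longleftrightarrow> (\<exists>c. c \<noteq> 0 \<and> w = smult3 c v)"
  by (auto simp: ppt_def)

lemma self_in_ppt: "(v :: 'a::field vec3) \<in> ppt v"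
  unfolding mem_ppt_iff by (cases v) (auto intro: exI[of _ 1])

lemma ppt_smult3:
  fixes v :: "'a::field vec3"
  assumes "c \<noteq> 0"
  shows "ppt (smult3 c v) = ppt v"
proof -
  have "smult3 e (smult3 c v) = smult3 (e * c) v" for e
    by (cases v) (simp add: mult.assoc)
  moreover have "smult3 e v = smult3 (e / c * c) v" for e
    using assms by simp
  ultimately show ?thesis
    unfolding ppt_def using assms by (metis divide_eq_0_iff mult_eq_0_iff)
qed

lemma det3_smult3: "det3 (smult3 a u) (smult3 b v) (smult3 c w) = a * b * c * det3 u v w"
  by (cases u; cases v; cases w) (simp add: det3_def algebra_simps)

lemma collinear3_ppt_iff:
  fixes u v w :: "'a::field vec3"
  shows "collinear3 (ppt u) (ppt v) (ppt w) \<longleftrightarrow> det3 u v w = 0"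
proof
  assume "collinear3 (ppt u) (ppt v) (ppt w)"
  then obtain a b c where "a \<noteq> 0" "b \<noteq> 0" "c \<noteq> 0"
    and "det3 (smult3 a u) (smult3 b v) (smult3 c w) = 0"
    unfolding collinear3_def Bex_def mem_ppt_iff by blast
  then show "det3 u v w = 0"
    by (simp add: det3_smult3)
qed (auto simp: collinear3_def intro: self_in_ppt)

lemma PG2_on_mT_iff:
  "R \<in> PG2 \<and> on_line mT R \<longleftrightarrow> (\<exists>a b :: 'a::field. (a, b) \<noteq> (0, 0) \<and> R = ppt (a, b, 0))"
proof
  assume R: "R \<in> PG2 \<and> on_line mT R"
  then obtain a b c :: 'a where abc: "(a, b, c) \<noteq> (0, 0, 0)" "R = ppt (a, b, c)"
    unfolding PG2_def by auto
  with R have "c = 0"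
    using self_in_ppt[of "(a, b, c)"] unfolding on_line_def mT_def by auto
  with abc show "\<exists>a b. (a, b) \<noteq> (0, 0) \<and> R = ppt (a, b, 0)"
    by auto
qed (auto simp: PG2_def on_line_def mT_def mem_ppt_iff)

lemma ppt_eq_if_line_eq:
  fixes l c w1 w2 :: "'a::field"
  assumes "l \<noteq> 0" and "(w1, w2) \<noteq> (0, 0)" and "w1 * l = c * w2 * l ^ q"
  shows "ppt (w1, w2, 0) = ppt (inverse l * c, inverse l ^ q, 0)"
proof -
  have "w2 \<noteq> 0"
    using assms by auto
  moreover have "(w1, w2, 0) = smult3 (w2 * l ^ q) (inverse l * c, inverse l ^ q, 0)"
    using assms(1,3) by (simp add: field_simps)
  ultimately show ?thesis
    using assms(1) by (metis ppt_smult3 mult_eq_0_iff power_eq_0_iff)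
qed

lemma Nrm_eq_prod_pow_q: "Nrm q x = x * x ^ q * (x ^ q) ^ q"
  by (simp add: Nrm_def power_add power2_eq_square power_mult mult_ac)

lemma Nrm_mult: "Nrm q (x * y) = Nrm q x * Nrm q y"
  by (simp add: Nrm_def power_mult_distrib)

text \<open>The assumptions on \<open>q\<close> say that \<open>x \<mapsto> x\<^sup>q\<close> is additive with identity as
  third iterate (the Frobenius of a field of order \<open>q\<^sup>3\<close>); \<open>s\<close> parametrises the centre
  of projection in \<open>\<Pi>\<^sub>\<kappa>\<close>.\<close>
locale Pi_projection =
  fixes q :: nat and \<theta> \<kappa> s :: "'a::{field,finite}"
  assumes q_pos: "0 < q"
    and pow_q_add: "((x :: 'a) + y) ^ q = x ^ q + y ^ q"
    and pow_q_cube: "(x :: 'a) ^ (q ^ 3) = x"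
    and s_nonzero: "s \<noteq> 0"
    and Nrm_neq: "Nrm q \<theta> \<noteq> Nrm q \<kappa>"
begin

lemma pow_q_diff: "((x :: 'a) - y) ^ q = x ^ q - y ^ q"
  using pow_q_add[of "x - y" y] by (simp add: eq_diff_eq)

lemma pow_q_sq: "(x :: 'a) ^ (q ^ 2) = (x ^ q) ^ q"
  by (simp add: power2_eq_square power_mult)

lemma pow_q_pow_q_pow_q: "(((x :: 'a) ^ q) ^ q) ^ q = x"
  using pow_q_cube[of x] by (simp add: power3_eq_cube power_mult)

lemma Nrm_pow_q_div_self:
  assumes "(u :: 'a) \<noteq> 0"
  shows "Nrm q (u ^ q / u) = 1"
proof -
  have "Nrm q (u ^ q) = Nrm q u"
    unfolding Nrm_eq_prod_pow_q pow_q_pow_q_pow_q by (simp add: mult_ac)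
  then show ?thesis
    using assms by (simp add: Nrm_def power_divide)
qed

definition centre :: "'a vec3" where
  "centre = (s * \<kappa> ^ (q + 1), s ^ q, s ^ (q ^ 2) * \<kappa>)"

definition Pi_vec :: "'a \<Rightarrow> 'a vec3" where
  "Pi_vec r = (r * \<theta> ^ (q + 1), r ^ q, r ^ (q ^ 2) * \<theta>)"

definition L :: "'a \<Rightarrow> 'a" where
  "L r = s ^ q * \<theta> * r ^ (q ^ 2) - s ^ (q ^ 2) * \<kappa> * r ^ q"

lemma det3_centre_Pi_vec:
  "det3 centre (Pi_vec r) (w1, w2, 0) = w1 * L r + \<kappa> * \<theta> * w2 * L r ^ q"
proof -
  have Lq: "L r ^ q = s ^ (q ^ 2) * \<theta> ^ q * r - s * \<kappa> ^ q * r ^ (q ^ 2)"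
    unfolding L_def pow_q_diff power_mult_distrib pow_q_sq pow_q_pow_q_pow_q by simp
  show ?thesis
    unfolding det3_def centre_def Pi_vec_def Lq by (simp add: L_def algebra_simps power_add)
qed

lemma L_diff: "L (a - b) = L a - L b"
  unfolding L_def pow_q_diff pow_q_sq by (simp add: algebra_simps)

text \<open>A nonzero root \<open>r\<close> of \<open>L\<close> would give \<open>\<theta> = \<kappa> u\<^sup>q / u\<close> with
  \<open>u = (s / r)\<^sup>q\<close>, and \<open>u\<^sup>q / u\<close> has norm \<open>1\<close>.\<close>
lemma L_eq_0_iff: "L r = 0 \<longleftrightarrow> r = 0"
proof
  assume L0: "L r = 0"
  show "r = 0"
  proof (rule ccontr)
    assume r: "r \<noteq> 0"
    define u where "u = (s / r) ^ q"
    have "u \<noteq> 0"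
      using r s_nonzero by (simp add: u_def)
    have "s ^ q * \<theta> * (r ^ q) ^ q = (s ^ q) ^ q * \<kappa> * r ^ q"
      using L0 unfolding L_def pow_q_sq by simp
    then have "\<theta> = \<kappa> * (u ^ q / u)"
      using r s_nonzero unfolding u_def power_divide by (simp add: field_simps)
    then have "Nrm q \<theta> = Nrm q \<kappa> * Nrm q (u ^ q / u)"
      by (simp only: Nrm_mult)
    with Nrm_neq \<open>u \<noteq> 0\<close> show False
      by (simp add: Nrm_pow_q_div_self)
  qed
qed (use q_pos in \<open>simp add: L_def power_0_left\<close>)

lemma surj_L: "surj L"
proof -
  have "inj L"
  proof (rule injI)
    fix a b
    assume "L a = L b"
    then show "a = b"
      using L_eq_0_iff[of "a - b"] by (simp add: L_diff)
  qed
  then show ?thesis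
    by (simp add: finite_UNIV_inj_surj)
qed

lemma ppt_Pi_vec_neq_centre:
  assumes "r \<noteq> 0"
  shows "ppt (Pi_vec r) \<noteq> ppt centre"
proof
  assume "ppt (Pi_vec r) = ppt centre"
  then obtain c where "Pi_vec r = smult3 c centre"
    using self_in_ppt[of "Pi_vec r"] by (auto simp: mem_ppt_iff)
  then have "L r = 0"
    unfolding L_def Pi_vec_def centre_def by (simp add: algebra_simps)
  with assms show False
    by (simp add: L_eq_0_iff)
qed

theorem projection_centre_Pi_set:
  "projection (ppt centre) (Pi_set q \<theta>) mT = S_set q (- (\<kappa> * \<theta>))"
proof (intro equalityI subsetI)
  fix R
  assume "R \<in> projection (ppt centre) (Pi_set q \<theta>) mT"
  then obtain r w1 w2 where r: "r \<noteq> 0" and w: "(w1, w2) \<noteq> (0, 0)"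
    and R: "R = ppt (w1, w2, 0)" and col: "collinear3 (ppt centre) (ppt (Pi_vec r)) R"
    unfolding projection_def Pi_set_def Pi_vec_def[symmetric]
    using PG2_on_mT_iff[of R] by blast
  have "L r \<noteq> 0"
    using r by (simp add: L_eq_0_iff)
  moreover have "w1 * L r = - (\<kappa> * \<theta>) * w2 * L r ^ q"
    using col unfolding R collinear3_ppt_iff det3_centre_Pi_vec
    by (simp add: eq_neg_iff_add_eq_0 mult_ac)
  ultimately have "R = ppt (inverse (L r) * - (\<kappa> * \<theta>), inverse (L r) ^ q, 0)"
    unfolding R by (rule ppt_eq_if_line_eq[OF _ w])
  then show "R \<in> S_set q (- (\<kappa> * \<theta>))"
    unfolding S_set_def using \<open>L r \<noteq> 0\<close> by auto
next
  fix R
  assume "R \<in> S_set q (- (\<kappa> * \<theta>))"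
  then obtain x where x: "x \<noteq> 0" and R: "R = ppt (x * - (\<kappa> * \<theta>), x ^ q, 0)"
    unfolding S_set_def by blast
  obtain r where Lr: "L r = inverse x"
    using surjD[OF surj_L, of "inverse x"] by force
  then have "L r \<noteq> 0"
    using x by simp
  then have "r \<noteq> 0"
    by (simp add: L_eq_0_iff)
  have "R \<in> PG2 \<and> on_line mT R"
    unfolding PG2_on_mT_iff R using x by (intro exI[of _ "x * - (\<kappa> * \<theta>)"] exI[of _ "x ^ q"]) simp
  moreover have "ppt (Pi_vec r) \<in> Pi_set q \<theta>"
    unfolding Pi_set_def Pi_vec_def using \<open>r \<noteq> 0\<close> by blast
  moreover have "collinear3 (ppt centre) (ppt (Pi_vec r)) R"
    unfolding R collinear3_ppt_iff det3_centre_Pi_vec Lr using x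
    by (simp add: field_simps power_inverse)
  ultimately show "R \<in> projection (ppt centre) (Pi_set q \<theta>) mT"
    unfolding projection_def using ppt_Pi_vec_neq_centre[OF \<open>r \<noteq> 0\<close>] by blast
qed

end

theorem lemma7p2:
  fixes \<theta> \<kappa> :: "'a::{field,finite}" and q p k :: nat and P :: "'a vec3 set"
  assumes "prime p" and "k > 0" and "q = p ^ k" and "card (UNIV :: 'a set) = q ^ 3"
    and "\<theta> \<noteq> 0" and "\<kappa> \<noteq> 0" and "Nrm q \<theta> \<noteq> Nrm q \<kappa>"
    and "P \<in> Pi_set q \<kappa>"
  shows "projection P (Pi_set q \<theta>) mT = S_set q (-(\<kappa>*\<theta>))"
proof -
  obtain s where s: "s \<noteq> 0" and P: "P = ppt (s * \<kappa> ^ (q + 1), s ^ q, s ^ (q ^ 2) * \<kappa>)"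
    using assms(8) unfolding Pi_set_def by blast
  have "CHAR('a) = p"
    using assms(3,4) by (intro CHAR_finite_field[OF assms(1), where n = "k * 3"]) (simp add: power_mult)
  interpret Pi_projection q \<theta> \<kappa> s
  proof
    show "0 < q"
      using assms(1,3) by (simp add: prime_gt_0_nat)
    show "(x + y) ^ q = x ^ q + y ^ q" for x y :: 'a
      using \<open>CHAR('a) = p\<close> assms(1,3) by (simp add: freshmans_dream')
    show "x ^ (q ^ 3) = x" for x :: 'a
      using finite_field_pow_card[of x] assms(4) by simp
  qed (use assms s in auto)
  show ?thesis
    using projection_centre_Pi_set by (simp add: P centre_def)
qed

end
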